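(* Let $d\ge2$ and $r,s\ge1$ be integers, and $a_1,\dots,a_d,a'_1,\dots,a'_d\in k$. Let $\widetilde X(d,r)\subset\mathbb{A}^3=\mathrm{Spec}\,k[x,y,z]$ be the hypersurface $x^rz+(y^d+a_1xy^{d-1}+\dots+a_{d-1}x^{d-1}y+a_dx^d)=1$ and $\widetilde X'(d,s)$ the hypersurface $x^sz+(y^d+a'_1xy^{d-1}+\dots+a'_{d-1}x^{d-1}y+a'_dx^d)=1$. Let $W(d,r,s)$ be the variety obtained by gluing $d$ copies $\{\omega\}\times\mathbb{A}^3$ ($\omega\in H(d)$) of $\mathbb{A}^3$ with coordinates $(x,c_1,c_2)$ via the identifications, for $x\neq0$, $(\omega,x,c_1,c_2)\sim\left(\lambda,x,\,c_1+\frac{p_\omega(x)-p_\lambda(x)}{x^r},\,c_2+\frac{p'_\omega(x)-p'_\lambda(x)}{x^s}\right)$. Then there are isomorphisms $\widetilde X(d,r)\times\mathbb{A}^1\cong W(d,r,s)\cong\widetilde X'(d,s)\times\mathbb{A}^1$.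
   Context: Work over an algebraically closed field $k$ of characteristic zero. $H(d)$ denotes the group of $d$-th roots of unity in $k$. For $\omega\in H(d)$, $p_\omega(x)\in k[x]$ is the unique polynomial of degree $\le r-1$ with $p_\omega(0)=\omega$ such that there is $q_\omega(x)\in k[x]$ with $x^rq_\omega(x)+p_\omega(x)^d+a_1xp_\omega(x)^{d-1}+\dots+a_{d-1}x^{d-1}p_\omega(x)+a_dx^d=1$; similarly $p'_\omega(x)$ is the unique polynomial of degree $\le s-1$ with $p'_\omega(0)=\omega$ such that $x^s$ divides $1-(p'_\omega(x)^d+a'_1xp'_\omega(x)^{d-1}+\dots+a'_dx^d)$. *)

theory Defs
  imports "HOL-Computational_Algebra.Polynomial"
begin

inductive_set polyfun :: "nat \<Rightarrow> ('a::comm_ring_1 list \<Rightarrow> 'a) set" for n where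
  proj: "i < n \<Longrightarrow> (\<lambda>v. v ! i) \<in> polyfun n"
| const: "(\<lambda>v. c) \<in> polyfun n"
| add: "f \<in> polyfun n \<Longrightarrow> g \<in> polyfun n \<Longrightarrow> (\<lambda>v. f v + g v) \<in> polyfun n"
| mult: "f \<in> polyfun n \<Longrightarrow> g \<in> polyfun n \<Longrightarrow> (\<lambda>v. f v * g v) \<in> polyfun n"

definition H :: "nat \<Rightarrow> 'a::field set" where
  "H d = {w. w ^ d = 1}"

definition Fsub :: "nat \<Rightarrow> (nat \<Rightarrow> 'a::field) \<Rightarrow> 'a poly \<Rightarrow> 'a poly" where
  "Fsub d a p = p ^ d + (\<Sum>i=1..d. smult (a i) (monom 1 i * p ^ (d - i)))"

definition pw :: "nat \<Rightarrow> (nat \<Rightarrow> 'a::field) \<Rightarrow> nat \<Rightarrow> 'a \<Rightarrow> 'a poly" where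
  "pw d a r w = (THE p. degree p \<le> r - 1 \<and> poly p 0 = w \<and> monom 1 r dvd (1 - Fsub d a p))"

definition Xt :: "nat \<Rightarrow> nat \<Rightarrow> (nat \<Rightarrow> 'a::field) \<Rightarrow> 'a list set" where
  "Xt d r a = {[x, y, z] | x y z.
      x ^ r * z + (y ^ d + (\<Sum>i=1..d. a i * x ^ i * y ^ (d - i))) = 1}"

text \<open>Product with the affine line: append one free coordinate.\<close>
definition cyl :: "'a list set \<Rightarrow> 'a list set" where
  "cyl S = {v @ [t] | v t. v \<in> S}"

definition glue_rel :: "nat \<Rightarrow> nat \<Rightarrow> nat \<Rightarrow> (nat \<Rightarrow> 'a::field) \<Rightarrow> (nat \<Rightarrow> 'a)
    \<Rightarrow> (('a \<times> 'a list) \<times> ('a \<times> 'a list)) set" where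
  "glue_rel d r s a a' = {((w, [x, c1, c2]), (l, [x', c1', c2'])) | w l x c1 c2 x' c1' c2'.
      w \<in> H d \<and> l \<in> H d \<and> x' = x \<and>
      ((w = l \<and> c1' = c1 \<and> c2' = c2) \<or>
       (x \<noteq> 0 \<and> c1' = c1 + (poly (pw d a r w) x - poly (pw d a r l) x) / x ^ r
               \<and> c2' = c2 + (poly (pw d a' s w) x - poly (pw d a' s l) x) / x ^ s))}"

definition Wpts :: "nat \<Rightarrow> nat \<Rightarrow> nat \<Rightarrow> (nat \<Rightarrow> 'a::field) \<Rightarrow> (nat \<Rightarrow> 'a)
    \<Rightarrow> ('a \<times> 'a list) set set" where
  "Wpts d r s a a' = (H d \<times> {v. length v = 3}) // glue_rel d r s a a'"

definition Wcls :: "nat \<Rightarrow> nat \<Rightarrow> nat \<Rightarrow> (nat \<Rightarrow> 'a::field) \<Rightarrow> (nat \<Rightarrow> 'a)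
    \<Rightarrow> 'a \<Rightarrow> 'a list \<Rightarrow> ('a \<times> 'a list) set" where
  "Wcls d r s a a' w v = glue_rel d r s a a' `` {(w, v)}"

text \<open>Morphism from a (quasi-)affine variety S in A^n to W: locally (on basic opens
  h \<noteq> 0 around each point) it lands in one chart with regular coordinates g_i/h.\<close>
definition mor_to_W :: "nat \<Rightarrow> 'a list set \<Rightarrow> nat \<Rightarrow> nat \<Rightarrow> nat \<Rightarrow> (nat \<Rightarrow> 'a::field)
    \<Rightarrow> (nat \<Rightarrow> 'a) \<Rightarrow> ('a list \<Rightarrow> ('a \<times> 'a list) set) \<Rightarrow> bool" where
  "mor_to_W n S d r s a a' \<phi> \<longleftrightarrow>
     (\<forall>p\<in>S. \<exists>w\<in>H d. \<exists>h g1 g2 g3.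
        h \<in> polyfun n \<and> g1 \<in> polyfun n \<and> g2 \<in> polyfun n \<and> g3 \<in> polyfun n \<and> h p \<noteq> 0 \<and>
        (\<forall>q\<in>S. h q \<noteq> 0 \<longrightarrow> \<phi> q = Wcls d r s a a' w [g1 q / h q, g2 q / h q, g3 q / h q]))"

definition mor_from_W :: "nat \<Rightarrow> 'a list set \<Rightarrow> nat \<Rightarrow> nat \<Rightarrow> nat \<Rightarrow> (nat \<Rightarrow> 'a::field)
    \<Rightarrow> (nat \<Rightarrow> 'a) \<Rightarrow> (('a \<times> 'a list) set \<Rightarrow> 'a list) \<Rightarrow> bool" where
  "mor_from_W m S d r s a a' \<psi> \<longleftrightarrow>
     \<psi> ` Wpts d r s a a' \<subseteq> S \<and>
     (\<forall>w\<in>H d. \<exists>gs. length gs = m \<and> (\<forall>g\<in>set gs. g \<in> polyfun 3) \<and>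
        (\<forall>v. length v = 3 \<longrightarrow> \<psi> (Wcls d r s a a' w v) = map (\<lambda>g. g v) gs))"

definition iso_W :: "nat \<Rightarrow> 'a list set \<Rightarrow> nat \<Rightarrow> nat \<Rightarrow> nat \<Rightarrow> (nat \<Rightarrow> 'a::field)
    \<Rightarrow> (nat \<Rightarrow> 'a) \<Rightarrow> bool" where
  "iso_W n S d r s a a' \<longleftrightarrow>
     (\<exists>\<phi> \<psi>. mor_to_W n S d r s a a' \<phi> \<and> mor_from_W n S d r s a a' \<psi> \<and>
        (\<forall>p\<in>S. \<psi> (\<phi> p) = p) \<and> (\<forall>x\<in>Wpts d r s a a'. \<phi> (\<psi> x) = x))"

end

theory Submission
  imports Defs
begin

text \<open>Where \<open>x \<noteq> 0\<close> everything is trivially glued; the content is along \<open>x = 0\<close>, where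
  \<open>X(d, r)\<close> consists of the lines \<open>y = \<omega>\<close>, \<open>\<omega> \<in> H(d)\<close>.  Near the line \<open>y = \<omega>\<close> the
  function \<open>u = (y - p\<^sub>\<omega>(x)) / x\<^sup>r\<close> is regular (this is why \<open>p\<^sub>\<omega>\<close>, obtained by Hensel
  lifting, makes \<open>x\<^sup>r\<close> divide \<open>1 - F(x, p\<^sub>\<omega>)\<close>), and \<open>(x, u)\<close> is a chart \<open>A\<^sup>2\<close>; two such
  charts differ by the shift \<open>(p\<^sub>\<omega> - p\<^sub>\<lambda>)/x\<^sup>r\<close>, the first gluing of \<open>W\<close>.  For the second
  gluing one needs a regular function \<open>P\<close> on \<open>X(d, r)\<close> that is congruent to \<open>p'\<^sub>\<omega>(x)\<close>
  modulo \<open>x\<^sup>s\<close> on chart \<open>\<omega>\<close>: take \<open>P = \<Sum>\<^sub>\<lambda> p'\<^sub>\<lambda>(x) L\<^sub>\<lambda>(\<Omega>)\<close> with Lagrange polynomials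
  \<open>L\<^sub>\<lambda>\<close> on \<open>H(d)\<close> and \<open>\<Omega> = y (1 + x E)\<^bsup>-1/d\<^esup>\<close> truncated, which is a \<open>d\<close>-th root of unity
  modulo \<open>x\<^sup>s\<close> because \<open>y\<^sup>d = 1 + x E\<close> on \<open>X(d, r)\<close>.  Then \<open>t - (p'\<^sub>\<omega> - P)/x\<^sup>s\<close> is the
  fibre coordinate of chart \<open>\<omega>\<close>.  Exchanging \<open>(r, a)\<close> with \<open>(s, a')\<close> swaps the fibre
  coordinates of \<open>W\<close> and gives the second isomorphism.\<close>

lemma polyfun_diff: "f \<in> polyfun n \<Longrightarrow> g \<in> polyfun n \<Longrightarrow> (\<lambda>v. f v - g v) \<in> polyfun n"
proof -
  assume "f \<in> polyfun n" "g \<in> polyfun n"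
  then have "(\<lambda>v. f v + (\<lambda>v. -1) v * g v) \<in> polyfun n"
    by (intro polyfun.add polyfun.mult polyfun.const)
  then show ?thesis by simp
qed

lemma polyfun_uminus: "f \<in> polyfun n \<Longrightarrow> (\<lambda>v. - f v) \<in> polyfun n"
  using polyfun_diff[OF polyfun.const[of 0]] by simp

lemma polyfun_power: "f \<in> polyfun n \<Longrightarrow> (\<lambda>v. f v ^ k) \<in> polyfun n"
  by (induction k) (simp_all add: polyfun.const[of 1, simplified] polyfun.mult)

lemma polyfun_sum: "(\<And>i. i \<in> I \<Longrightarrow> (\<lambda>v. f i v) \<in> polyfun n) \<Longrightarrow> (\<lambda>v. \<Sum>i\<in>I. f i v) \<in> polyfun n"
proof (induction I rule: infinite_finite_induct)
  case (insert i I)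
  then show ?case using polyfun.add[of "f i" n "\<lambda>v. \<Sum>i\<in>I. f i v"] by simp
qed (simp_all add: polyfun.const[of 0, simplified])

lemma polyfun_poly: "f \<in> polyfun n \<Longrightarrow> (\<lambda>v. poly p (f v)) \<in> polyfun n"
proof (induction p)
  case (pCons c p)
  have "(\<lambda>v. c + f v * poly p (f v)) \<in> polyfun n"
    by (intro polyfun.add polyfun.mult polyfun.const pCons)
  then show ?case by simp
qed (simp add: polyfun.const[of 0, simplified])

lemmas polyfun_intros =
  polyfun.proj polyfun.const polyfun.add polyfun.mult
  polyfun_diff polyfun_uminus polyfun_power polyfun_sum polyfun_poly

lemma polyfun_compose:
  assumes "g \<in> polyfun m" and "length fs = m" and "\<And>f. f \<in> set fs \<Longrightarrow> f \<in> polyfun n"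
  shows "(\<lambda>q. g (map (\<lambda>f. f q) fs)) \<in> polyfun n"
  using assms(1)
proof induction
  case (proj i)
  then show ?case using assms(2,3) by simp
qed (auto intro: polyfun_intros)

lemma polyfun_compose_fractions:
  fixes h :: "'a::field list \<Rightarrow> 'a"
  assumes "g \<in> polyfun m" and "length fs = m" and "\<And>f. f \<in> set fs \<Longrightarrow> f \<in> polyfun n"
    and h: "h \<in> polyfun n"
  shows "\<exists>N G. G \<in> polyfun n \<and> (\<forall>q. h q \<noteq> 0 \<longrightarrow> g (map (\<lambda>f. f q / h q) fs) = G q / h q ^ N)"
  using assms(1)
proof induction
  case (proj i)
  then show ?case using assms(2,3) by (intro exI[of _ 1] exI[of _ "fs ! i"]) auto
next
  case (const c)
  then show ?case by (intro exI[of _ 0] exI[of _ "\<lambda>q. c"]) (auto intro: polyfun.const)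
next
  case (add f g)
  then obtain N1 G1 N2 G2 where
    1: "G1 \<in> polyfun n" "\<forall>q. h q \<noteq> 0 \<longrightarrow> f (map (\<lambda>f. f q / h q) fs) = G1 q / h q ^ N1" and
    2: "G2 \<in> polyfun n" "\<forall>q. h q \<noteq> 0 \<longrightarrow> g (map (\<lambda>f. f q / h q) fs) = G2 q / h q ^ N2"
    by blast
  show ?case
  proof (intro exI[of _ "N1 + N2"] exI[of _ "\<lambda>q. G1 q * h q ^ N2 + G2 q * h q ^ N1"] conjI allI impI)
    show "(\<lambda>q. G1 q * h q ^ N2 + G2 q * h q ^ N1) \<in> polyfun n"
      by (intro polyfun_intros 1 2 h)
  qed (use 1 2 in \<open>simp add: field_simps power_add\<close>)
next
  case (mult f g)
  then obtain N1 G1 N2 G2 where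
    1: "G1 \<in> polyfun n" "\<forall>q. h q \<noteq> 0 \<longrightarrow> f (map (\<lambda>f. f q / h q) fs) = G1 q / h q ^ N1" and
    2: "G2 \<in> polyfun n" "\<forall>q. h q \<noteq> 0 \<longrightarrow> g (map (\<lambda>f. f q / h q) fs) = G2 q / h q ^ N2"
    by blast
  show ?case
    by (intro exI[of _ "N1 + N2"] exI[of _ "\<lambda>q. G1 q * G2 q"] conjI allI impI polyfun.mult 1 2)
      (use 1 2 in \<open>simp add: power_add\<close>)
qed

definition power_diff_quot :: "nat \<Rightarrow> 'a::comm_ring_1 \<Rightarrow> 'a \<Rightarrow> 'a" where
  "power_diff_quot n y p = (\<Sum>i<n. p ^ (n - Suc i) * y ^ i)"

lemma power_diff_eq_mult_quot: "y ^ n - p ^ n = (y - p) * power_diff_quot n y p"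
  unfolding power_diff_quot_def by (rule power_diff_sumr2)

lemma power_diff_quot_diag: "power_diff_quot n w w = of_nat n * w ^ (n - 1)"
proof -
  have "power_diff_quot n w w = (\<Sum>i<n. w ^ (n - 1))"
    unfolding power_diff_quot_def by (intro sum.cong refl) (simp add: power_add[symmetric])
  then show ?thesis by simp
qed

definition binary_form :: "nat \<Rightarrow> (nat \<Rightarrow> 'a::comm_ring_1) \<Rightarrow> 'a \<Rightarrow> 'a \<Rightarrow> 'a" where
  "binary_form d a x y = y ^ d + (\<Sum>i=1..d. a i * x ^ i * y ^ (d - i))"

definition binary_form_quot :: "nat \<Rightarrow> (nat \<Rightarrow> 'a::comm_ring_1) \<Rightarrow> 'a \<Rightarrow> 'a \<Rightarrow> 'a \<Rightarrow> 'a" where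
  "binary_form_quot d a x y p =
     power_diff_quot d y p + (\<Sum>i=1..d. a i * x ^ i * power_diff_quot (d - i) y p)"

lemma binary_form_diff:
  "binary_form d a x y - binary_form d a x p = (y - p) * binary_form_quot d a x y p"
proof -
  have "binary_form d a x y - binary_form d a x p =
      (y ^ d - p ^ d) + (\<Sum>i=1..d. a i * x ^ i * (y ^ (d - i) - p ^ (d - i)))"
    unfolding binary_form_def by (simp add: sum_subtractf[symmetric] right_diff_distrib)
  also have "\<dots> = (y - p) * binary_form_quot d a x y p"
    unfolding power_diff_eq_mult_quot binary_form_quot_def
    by (simp add: sum_distrib_left algebra_simps)
  finally show ?thesis .
qed

lemma binary_form_at_0: "d \<ge> 1 \<Longrightarrow> binary_form d a 0 y = y ^ d"
  unfolding binary_form_def by (auto simp: power_0_left intro!: sum.neutral)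

lemma binary_form_quot_at_0: "binary_form_quot d a 0 w w = of_nat d * w ^ (d - 1)"
  unfolding binary_form_quot_def by (auto simp: power_diff_quot_diag power_0_left intro!: sum.neutral)

lemma Fsub_eq_binary_form: "Fsub d a p = binary_form d (\<lambda>i. [:a i:]) [:0, 1:] p"
  unfolding Fsub_def binary_form_def by (simp add: monom_altdef mult.assoc)

lemma poly_binary_form:
  "poly (binary_form d (\<lambda>i. [:a i:]) [:0, 1:] p) x = binary_form d a x (poly p x)"
  by (simp add: binary_form_def poly_sum poly_power mult.assoc)

lemma poly_power_diff_quot:
  "poly (power_diff_quot n p q) x = power_diff_quot n (poly p x) (poly q x)"
  by (simp add: power_diff_quot_def poly_sum poly_power)

lemma poly_binary_form_quot:
  "poly (binary_form_quot d (\<lambda>i. [:a i:]) [:0, 1:] p q) x =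
     binary_form_quot d a x (poly p x) (poly q x)"
  by (simp add: binary_form_quot_def poly_power_diff_quot poly_sum poly_power mult.assoc)

lemma poly_Fsub: "poly (Fsub d a p) x = binary_form d a x (poly p x)"
  by (simp add: Fsub_eq_binary_form poly_binary_form)

section \<open>Hensel lifting modulo powers of x\<close>

lemma X_dvd_iff_poly_0: "[:0, 1:] dvd p \<longleftrightarrow> poly p 0 = 0"
  for p :: "'a::comm_ring_1 poly"
  using dvd_iff_poly_eq_0[of 0 p] by simp

lemma monom_1_dvd_mult_cancel:
  fixes f M :: "'a::idom poly"
  assumes M: "poly M 0 \<noteq> 0" and dvd: "monom 1 m dvd f * M"
  shows "monom 1 m dvd f"
proof (cases "f = 0")
  case False
  with M have "f * M \<noteq> 0" by auto
  with dvd have "m \<le> order 0 f + order 0 M"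
    by (simp add: monom_1_dvd_iff order_mult)
  with M have "m \<le> order 0 f" by (simp add: order_0I)
  with False show ?thesis by (simp add: monom_1_dvd_iff)
qed simp

text \<open>The increment hypothesis says that \<open>\<Phi>\<close> has the \<open>x\<close>-adic derivative \<open>D \<noteq> 0\<close> at
  every \<open>p\<close> with \<open>p(0) = w\<close>; Newton's method then corrects an approximate solution of
  \<open>\<Phi> p = 1\<close> by one monomial per power of \<open>x\<close>.\<close>
lemma hensel_lifting_exists:
  fixes \<Phi> :: "'a::field poly \<Rightarrow> 'a poly"
  assumes increment: "\<And>p h. poly p 0 = w \<Longrightarrow> poly h 0 = 0 \<Longrightarrow>
      \<exists>M. \<Phi> (p + h) - \<Phi> p = h * M \<and> poly M 0 = D"
    and D: "D \<noteq> 0" and start: "poly (\<Phi> [:w:]) 0 = 1" and m: "m \<ge> 1"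
  shows "\<exists>p. degree p \<le> m - 1 \<and> poly p 0 = w \<and> monom 1 m dvd (1 - \<Phi> p)"
  using m
proof (induction m rule: dec_induct)
  case base
  have "[:0, 1:] dvd (1 - \<Phi> [:w:])" using start by (simp add: X_dvd_iff_poly_0)
  then show ?case by (intro exI[of _ "[:w:]"]) (simp add: monom_altdef)
next
  case (step m)
  then obtain p R where p: "degree p \<le> m - 1" "poly p 0 = w" and R: "1 - \<Phi> p = monom 1 m * R"
    by (auto elim: dvdE)
  define c where "c = poly R 0 / D"
  have h0: "poly (monom c m) 0 = 0" using step.hyps by (simp add: poly_monom)
  obtain M where M: "\<Phi> (p + monom c m) - \<Phi> p = monom c m * M" "poly M 0 = D"
    using increment[OF p(2) h0] by blast
  have "monom c m * M = monom 1 m * smult c M"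
    by (simp add: monom_altdef mult.assoc)
  then have "1 - \<Phi> (p + monom c m) = monom 1 m * (R - smult c M)"
    using R M(1) by (simp add: algebra_simps)
  moreover have "[:0, 1:] dvd R - smult c M"
    using M(2) D by (simp add: X_dvd_iff_poly_0 c_def)
  ultimately have "monom 1 m * [:0, 1:] dvd 1 - \<Phi> (p + monom c m)"
    by (metis dvd_refl mult_dvd_mono)
  then have "monom 1 (Suc m) dvd 1 - \<Phi> (p + monom c m)"
    by (simp add: monom_altdef)
  moreover have "degree (p + monom c m) \<le> Suc m - 1"
    using p(1) step.hyps by (intro degree_add_le) (auto intro: order.trans[OF degree_monom_le])
  moreover have "poly (p + monom c m) 0 = w" using p(2) h0 by simp
  ultimately show ?case by blast
qed

lemma hensel_lifting_unique:
  fixes \<Phi> :: "'a::field poly \<Rightarrow> 'a poly"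
  assumes increment: "\<And>p h. poly p 0 = w \<Longrightarrow> poly h 0 = 0 \<Longrightarrow>
      \<exists>M. \<Phi> (p + h) - \<Phi> p = h * M \<and> poly M 0 = D"
    and D: "D \<noteq> 0" and m: "m \<ge> 1"
    and p1: "degree p1 \<le> m - 1" "poly p1 0 = w" "monom 1 m dvd (1 - \<Phi> p1)"
    and p2: "degree p2 \<le> m - 1" "poly p2 0 = w" "monom 1 m dvd (1 - \<Phi> p2)"
  shows "p1 = p2"
proof (rule ccontr)
  assume "p1 \<noteq> p2"
  have "poly (p2 - p1) 0 = 0" using p1 p2 by simp
  then obtain M where M: "\<Phi> p2 - \<Phi> p1 = (p2 - p1) * M" "poly M 0 = D"
    using increment[OF p1(2)] by fastforce
  have "monom 1 m dvd (1 - \<Phi> p1) - (1 - \<Phi> p2)" using p1(3) p2(3) by (rule dvd_diff)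
  then have "monom 1 m dvd (p2 - p1) * M" using M(1) by simp
  then have "monom 1 m dvd p2 - p1"
    by (rule monom_1_dvd_mult_cancel[rotated]) (use M(2) D in simp)
  moreover have "p2 - p1 \<noteq> 0" using \<open>p1 \<noteq> p2\<close> by simp
  ultimately have "degree (monom (1::'a) m) \<le> degree (p2 - p1)"
    using dvd_imp_degree_le by blast
  moreover have "degree (p2 - p1) \<le> m - 1" using p1(1) p2(1) by (meson degree_diff_le)
  ultimately show False using m by (simp add: degree_monom_eq)
qed

lemma hensel_lifting:
  fixes \<Phi> :: "'a::field poly \<Rightarrow> 'a poly"
  assumes "\<And>p h. poly p 0 = w \<Longrightarrow> poly h 0 = 0 \<Longrightarrow>
      \<exists>M. \<Phi> (p + h) - \<Phi> p = h * M \<and> poly M 0 = D"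
    and "D \<noteq> 0" and "poly (\<Phi> [:w:]) 0 = 1" and "m \<ge> 1"
  shows "\<exists>!p. degree p \<le> m - 1 \<and> poly p 0 = w \<and> monom 1 m dvd (1 - \<Phi> p)"
  using hensel_lifting_exists[OF assms] hensel_lifting_unique[OF assms(1,2,4)] by blast

lemma H_nonzero: "w \<in> H d \<Longrightarrow> d \<ge> 1 \<Longrightarrow> w \<noteq> 0"
  by (auto simp: H_def power_0_left)

lemma Fsub_increment:
  assumes "poly p 0 = w" and "poly h 0 = 0"
  shows "\<exists>M. Fsub d a (p + h) - Fsub d a p = h * M \<and> poly M 0 = of_nat d * w ^ (d - 1)"
proof (intro exI conjI)
  let ?M = "binary_form_quot d (\<lambda>i. [:a i:]) [:0, 1:] (p + h) p"
  show "Fsub d a (p + h) - Fsub d a p = h * ?M"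
    by (simp add: Fsub_eq_binary_form binary_form_diff)
  show "poly ?M 0 = of_nat d * w ^ (d - 1)"
    using assms by (simp add: poly_binary_form_quot binary_form_quot_at_0)
qed

lemma pw_props:
  fixes a :: "nat \<Rightarrow> 'a::field_char_0"
  assumes w: "w \<in> H d" and d: "d \<ge> 1" and r: "r \<ge> 1"
  shows "degree (pw d a r w) \<le> r - 1" and "poly (pw d a r w) 0 = w"
    and "monom 1 r dvd (1 - Fsub d a (pw d a r w))"
proof -
  have D: "of_nat d * w ^ (d - 1) \<noteq> (0::'a)" using H_nonzero[OF w d] d by simp
  have start: "poly (Fsub d a [:w:]) 0 = 1"
    using w d by (simp add: H_def poly_Fsub binary_form_at_0)
  have "\<exists>!p. degree p \<le> r - 1 \<and> poly p 0 = w \<and> monom 1 r dvd (1 - Fsub d a p)"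
    by (rule hensel_lifting[where \<Phi>="Fsub d a", OF Fsub_increment D start r])
  then have "degree (pw d a r w) \<le> r - 1 \<and> poly (pw d a r w) 0 = w
      \<and> monom 1 r dvd (1 - Fsub d a (pw d a r w))"
    unfolding pw_def by (rule theI')
  then show "degree (pw d a r w) \<le> r - 1" and "poly (pw d a r w) 0 = w"
    and "monom 1 r dvd (1 - Fsub d a (pw d a r w))" by blast+
qed

text \<open>A truncated power series \<open>S\<close> with \<open>S(0) = 1\<close> and \<open>S(e)\<^sup>d (1 + e) \<equiv> 1 mod e\<^sup>s\<close>,
  i.e. \<open>S(e) \<equiv> (1 + e)\<^bsup>-1/d\<^esup>\<close>; characteristic zero makes \<open>d\<close> invertible.\<close>
lemma approx_root_of_inverse:
  assumes d: "d \<ge> 1" and s: "s \<ge> 1"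
  shows "\<exists>S :: 'a::field_char_0 poly. poly S 0 = 1 \<and> monom 1 s dvd (1 - S ^ d * [:1, 1:])"
proof -
  have "\<exists>M. (p + h) ^ d * [:1, 1:] - p ^ d * [:1, 1:] = h * M \<and> poly M 0 = of_nat d"
    if "poly p 0 = 1" "poly h 0 = 0" for p h :: "'a poly"
  proof (intro exI conjI)
    let ?M = "power_diff_quot d (p + h) p * [:1, 1:]"
    show "(p + h) ^ d * [:1, 1:] - p ^ d * [:1, 1:] = h * ?M"
      by (simp only: left_diff_distrib[symmetric] power_diff_eq_mult_quot mult.assoc) simp
    show "poly ?M 0 = of_nat d"
      using that by (simp add: poly_power_diff_quot power_diff_quot_diag)
  qed
  moreover have "of_nat d \<noteq> (0::'a)" using d by simp
  moreover have "poly ([:1:] ^ d * [:1, 1:]) 0 = (1::'a)" by (simp add: poly_power)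
  ultimately have "\<exists>!S :: 'a poly. degree S \<le> s - 1 \<and> poly S 0 = 1 \<and> monom 1 s dvd (1 - S ^ d * [:1, 1:])"
    using s by (intro hensel_lifting[where \<Phi>="\<lambda>S. S ^ d * [:1, 1:]"])
  then show ?thesis by blast
qed

section \<open>The glued variety\<close>

definition glue_shift :: "nat \<Rightarrow> (nat \<Rightarrow> 'a::field) \<Rightarrow> nat \<Rightarrow> 'a \<Rightarrow> 'a \<Rightarrow> 'a \<Rightarrow> 'a" where
  "glue_shift d a r w l x = (poly (pw d a r w) x - poly (pw d a r l) x) / x ^ r"

lemma glue_shift_self [simp]: "glue_shift d a r w w x = 0"
  by (simp add: glue_shift_def)

lemma glue_shift_trans: "glue_shift d a r w l x + glue_shift d a r l m x = glue_shift d a r w m x"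
  by (simp add: glue_shift_def diff_divide_distrib)

text \<open>Both clauses of \<open>glue_rel\<close> become one, since the shifts vanish for \<open>w = l\<close>.\<close>
lemma glue_rel_iff:
  "((w, v), (l, v')) \<in> glue_rel d r s a a' \<longleftrightarrow> w \<in> H d \<and> l \<in> H d \<and>
     (\<exists>x c1 c2. v = [x, c1, c2] \<and> (x = 0 \<longrightarrow> w = l) \<and>
        v' = [x, c1 + glue_shift d a r w l x, c2 + glue_shift d a' s w l x])"
  unfolding glue_rel_def glue_shift_def by (cases "w = l") auto

lemma length_3_cases:
  assumes "length v = 3" obtains x c1 c2 where "v = [x, c1, c2]"
proof -
  have "v = [v ! 0, v ! 1, v ! 2]"
    using assms by (cases v; cases "tl v"; cases "tl (tl v)") (auto simp: numeral_3_eq_3)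
  then show ?thesis by (rule that)
qed

lemma glue_equiv: "equiv (H d \<times> {v. length v = 3}) (glue_rel d r s a a')"
proof (rule equivI)
  show "glue_rel d r s a a' \<subseteq> (H d \<times> {v. length v = 3}) \<times> (H d \<times> {v. length v = 3})"
    by (auto simp: glue_rel_iff)
  show "refl_on (H d \<times> {v. length v = 3}) (glue_rel d r s a a')"
    unfolding refl_on_def by (auto simp: glue_rel_iff elim!: length_3_cases)
  show "sym (glue_rel d r s a a')"
    unfolding sym_def by (auto simp: glue_rel_iff add.assoc glue_shift_trans)
  show "trans (glue_rel d r s a a')"
    unfolding trans_def by (auto simp: glue_rel_iff add.assoc glue_shift_trans)
qed

lemma Wcls_eq: "((w, v), (l, v')) \<in> glue_rel d r s a a' \<Longrightarrow> Wcls d r s a a' w v = Wcls d r s a a' l v'"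
  unfolding Wcls_def by (rule equiv_class_eq[OF glue_equiv])

lemma Wcls_self: "w \<in> H d \<Longrightarrow> length v = 3 \<Longrightarrow> (w, v) \<in> Wcls d r s a a' w v"
  unfolding Wcls_def by (rule equiv_class_self[OF glue_equiv]) auto

lemma Wcls_in_Wpts: "w \<in> H d \<Longrightarrow> length v = 3 \<Longrightarrow> Wcls d r s a a' w v \<in> Wpts d r s a a'"
  unfolding Wcls_def Wpts_def by (rule quotientI) auto

lemma WptsE:
  assumes "C \<in> Wpts d r s a a'"
  obtains w v where "w \<in> H d" "length v = 3" "C = Wcls d r s a a' w v"
  using assms unfolding Wpts_def Wcls_def by (auto elim!: quotientE)

lemma Wcls_explicit:
  "Wcls d r s a a' w [x, c1, c2] =
     (\<lambda>l. (l, [x, c1 + glue_shift d a r w l x, c2 + glue_shift d a' s w l x])) `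
       {l. w \<in> H d \<and> l \<in> H d \<and> (x = 0 \<longrightarrow> w = l)}"
  unfolding Wcls_def by (auto simp: glue_rel_iff)

definition swap_fibre :: "'a list \<Rightarrow> 'a list" where
  "swap_fibre v = [v ! 0, v ! 2, v ! 1]"

definition swap_W :: "('a \<times> 'a list) set \<Rightarrow> ('a \<times> 'a list) set" where
  "swap_W C = apsnd swap_fibre ` C"

lemma swap_W_Wcls:
  "length v = 3 \<Longrightarrow> swap_W (Wcls d r s a a' w v) = Wcls d s r a' a w (swap_fibre v)"
  by (elim length_3_cases) (simp add: swap_W_def swap_fibre_def Wcls_explicit image_image)

lemma swap_W_in_Wpts: "C \<in> Wpts d r s a a' \<Longrightarrow> swap_W C \<in> Wpts d s r a' a"
  by (elim WptsE) (simp add: swap_W_Wcls Wcls_in_Wpts swap_fibre_def)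

lemma swap_W_swap_W: "C \<in> Wpts d r s a a' \<Longrightarrow> swap_W (swap_W C) = C"
  by (elim WptsE length_3_cases) (simp add: swap_W_Wcls swap_fibre_def)

lemma mor_to_W_in_Wpts:
  assumes "mor_to_W n S d r s a a' \<phi>" and "p \<in> S"
  shows "\<phi> p \<in> Wpts d r s a a'"
proof -
  from assms obtain w h g1 g2 g3 where "w \<in> H d" "h p \<noteq> 0"
    "\<forall>q\<in>S. h q \<noteq> 0 \<longrightarrow> \<phi> q = Wcls d r s a a' w [g1 q / h q, g2 q / h q, g3 q / h q]"
    unfolding mor_to_W_def by blast
  with \<open>p \<in> S\<close> have "\<phi> p = Wcls d r s a a' w [g1 p / h p, g2 p / h p, g3 p / h p]" by blast
  with \<open>w \<in> H d\<close> show ?thesis by (simp add: Wcls_in_Wpts)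
qed

lemma mor_to_W_swap:
  assumes "mor_to_W n S d s r a' a \<phi>"
  shows "mor_to_W n S d r s a a' (\<lambda>q. swap_W (\<phi> q))"
  unfolding mor_to_W_def
proof
  fix p assume "p \<in> S"
  with assms obtain w h g1 g2 g3 where w: "w \<in> H d"
    and pf: "h \<in> polyfun n" "g1 \<in> polyfun n" "g2 \<in> polyfun n" "g3 \<in> polyfun n" "h p \<noteq> 0"
    and loc: "\<forall>q\<in>S. h q \<noteq> 0 \<longrightarrow> \<phi> q = Wcls d s r a' a w [g1 q / h q, g2 q / h q, g3 q / h q]"
    unfolding mor_to_W_def by blast
  have swapped: "\<forall>q\<in>S. h q \<noteq> 0 \<longrightarrow> swap_W (\<phi> q) = Wcls d r s a a' w [g1 q / h q, g3 q / h q, g2 q / h q]"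
  proof (intro ballI impI)
    fix q assume "q \<in> S" "h q \<noteq> 0"
    with loc have "\<phi> q = Wcls d s r a' a w [g1 q / h q, g2 q / h q, g3 q / h q]" by blast
    then show "swap_W (\<phi> q) = Wcls d r s a a' w [g1 q / h q, g3 q / h q, g2 q / h q]"
      by (simp add: swap_W_Wcls swap_fibre_def)
  qed
  show "\<exists>w\<in>H d. \<exists>h g1 g2 g3. h \<in> polyfun n \<and> g1 \<in> polyfun n \<and> g2 \<in> polyfun n \<and>
      g3 \<in> polyfun n \<and> h p \<noteq> 0 \<and>
      (\<forall>q\<in>S. h q \<noteq> 0 \<longrightarrow> swap_W (\<phi> q) = Wcls d r s a a' w [g1 q / h q, g2 q / h q, g3 q / h q])"
    by (intro bexI[OF _ w] exI[of _ h] exI[of _ g1] exI[of _ g3] exI[of _ g2] conjI pf swapped)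
qed

lemma mor_from_W_swap:
  assumes "mor_from_W n S d s r a' a \<psi>"
  shows "mor_from_W n S d r s a a' (\<lambda>C. \<psi> (swap_W C))"
  unfolding mor_from_W_def
proof (intro conjI ballI)
  have "\<psi> ` Wpts d s r a' a \<subseteq> S" using assms unfolding mor_from_W_def by blast
  then show "(\<lambda>C. \<psi> (swap_W C)) ` Wpts d r s a a' \<subseteq> S"
    using swap_W_in_Wpts by blast
next
  fix w :: 'a assume "w \<in> H d"
  with assms obtain gs where gs: "length gs = n" "\<forall>g\<in>set gs. g \<in> polyfun 3"
    "\<forall>v. length v = 3 \<longrightarrow> \<psi> (Wcls d s r a' a w v) = map (\<lambda>g. g v) gs"
    unfolding mor_from_W_def by blast
  define fs :: "('a list \<Rightarrow> 'a) list" where "fs = [\<lambda>v. v ! 0, \<lambda>v. v ! 2, \<lambda>v. v ! 1]"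
  have swap: "swap_fibre v = map (\<lambda>f. f v) fs" for v by (simp add: fs_def swap_fibre_def)
  show "\<exists>gs. length gs = n \<and> (\<forall>g\<in>set gs. g \<in> polyfun 3) \<and>
      (\<forall>v. length v = 3 \<longrightarrow> \<psi> (swap_W (Wcls d r s a a' w v)) = map (\<lambda>g. g v) gs)"
  proof (intro exI[of _ "map (\<lambda>g v. g (swap_fibre v)) gs"] conjI allI impI ballI)
    fix g assume "g \<in> set (map (\<lambda>g v. g (swap_fibre v)) gs)"
    then obtain g0 where "g0 \<in> set gs" "g = (\<lambda>v. g0 (map (\<lambda>f. f v) fs))"
      unfolding swap by auto
    moreover have "f \<in> polyfun 3" if "f \<in> set fs" for f
      using that by (auto simp: fs_def intro: polyfun.proj)
    ultimately show "g \<in> polyfun 3"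
      using gs(2) polyfun_compose[of g0 3 fs] by (simp add: fs_def)
  next
    fix v :: "'a list" assume "length v = 3"
    with gs(3) show "\<psi> (swap_W (Wcls d r s a a' w v)) = map (\<lambda>g. g v) (map (\<lambda>g v. g (swap_fibre v)) gs)"
      by (simp add: swap_W_Wcls swap_fibre_def)
  qed (use gs(1) in simp)
qed

lemma iso_W_swap:
  assumes "iso_W n S d s r a' a"
  shows "iso_W n S d r s a a'"
proof -
  obtain \<phi> \<psi> where \<phi>: "mor_to_W n S d s r a' a \<phi>" and \<psi>: "mor_from_W n S d s r a' a \<psi>"
    and inv1: "\<forall>p\<in>S. \<psi> (\<phi> p) = p" and inv2: "\<forall>C\<in>Wpts d s r a' a. \<phi> (\<psi> C) = C"
    using assms unfolding iso_W_def by blast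
  have "\<forall>p\<in>S. \<psi> (swap_W (swap_W (\<phi> p))) = p"
    using inv1 swap_W_swap_W[OF mor_to_W_in_Wpts[OF \<phi>]] by simp
  moreover have "\<forall>C\<in>Wpts d r s a a'. swap_W (\<phi> (\<psi> (swap_W C))) = C"
    using inv2 swap_W_swap_W[of _ d r s a a'] by (simp add: swap_W_in_Wpts)
  ultimately show ?thesis
    unfolding iso_W_def using mor_to_W_swap[OF \<phi>] mor_from_W_swap[OF \<psi>] by blast
qed

lemma poly_eq_synthetic_div: "poly p y = poly p c + (y - c) * poly (synthetic_div p c) y"
  for p :: "'a::comm_ring_1 poly"
  using arg_cong[OF synthetic_div_correct'[of c p], of "\<lambda>q. poly q y"] by (simp add: algebra_simps)

definition x_multiples :: "nat \<Rightarrow> nat \<Rightarrow> ('a::comm_ring_1 list \<Rightarrow> 'a) set" where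
  "x_multiples n m = {f. \<exists>g\<in>polyfun n. \<forall>v. f v = (v ! 0) ^ m * g v}"

lemma x_multiplesI: "g \<in> polyfun n \<Longrightarrow> (\<And>v. f v = (v ! 0) ^ m * g v) \<Longrightarrow> f \<in> x_multiples n m"
  unfolding x_multiples_def by blast

lemma x_multiplesE:
  assumes "f \<in> x_multiples n m"
  obtains g where "g \<in> polyfun n" "\<And>v. f v = (v ! 0) ^ m * g v"
  using assms unfolding x_multiples_def by blast

lemma x_multiples_mult: "h \<in> polyfun n \<Longrightarrow> g \<in> x_multiples n m \<Longrightarrow> (\<lambda>v. h v * g v) \<in> x_multiples n m"
  by (elim x_multiplesE, rule x_multiplesI, erule (1) polyfun.mult) (simp add: mult.left_commute)

lemma x_multiples_uminus: "g \<in> x_multiples n m \<Longrightarrow> (\<lambda>v. - g v) \<in> x_multiples n m"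
  using x_multiples_mult[OF polyfun.const[of "-1"]] by simp

lemma x_multiples_sum:
  "(\<And>i. i \<in> I \<Longrightarrow> (\<lambda>v. f i v) \<in> x_multiples n m) \<Longrightarrow> (\<lambda>v. \<Sum>i\<in>I. f i v) \<in> x_multiples n m"
proof (induction I rule: infinite_finite_induct)
  case (insert i I)
  then obtain g1 g2 where "g1 \<in> polyfun n" "\<And>v. f i v = (v ! 0) ^ m * g1 v"
    "g2 \<in> polyfun n" "\<And>v. (\<Sum>i\<in>I. f i v) = (v ! 0) ^ m * g2 v"
    by (metis insertCI x_multiplesE)
  with insert.hyps show ?case
    by (intro x_multiplesI[of "\<lambda>v. g1 v + g2 v"] polyfun.add) (simp_all add: distrib_left)
qed (simp_all add: x_multiplesI[OF polyfun.const[of 0]])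

lemma x_multiples_poly_diff:
  assumes "f \<in> polyfun n" and "(\<lambda>v. f v - c) \<in> x_multiples n m"
  shows "(\<lambda>v. poly p (f v) - poly p c) \<in> x_multiples n m"
proof -
  have "(\<lambda>v. poly (synthetic_div p c) (f v) * (f v - c)) \<in> x_multiples n m"
    using assms by (intro x_multiples_mult polyfun_poly)
  then show ?thesis
    by (subst poly_eq_synthetic_div[of p _ c]) (simp add: mult.commute)
qed

text \<open>\<open>g\<close> is a unit modulo \<open>x\<^sup>m\<close>: for \<open>k = -h/c\<close> one has
  \<open>g \<cdot> (\<Sum>j<m. (x k)\<^sup>j) / c = 1 - (x k)\<^sup>m\<close>.\<close>
lemma x_multiples_cancel_unit:
  fixes f g h :: "'a::field list \<Rightarrow> 'a"
  assumes n: "0 < n" and f: "f \<in> polyfun n" and h: "h \<in> polyfun n"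
    and fg: "(\<lambda>v. f v * g v) \<in> x_multiples n m"
    and g: "\<And>v. g v = c + v ! 0 * h v" and c: "c \<noteq> 0"
  shows "f \<in> x_multiples n m"
proof -
  obtain F where F: "F \<in> polyfun n" "\<And>v. f v * g v = (v ! 0) ^ m * F v"
    using x_multiplesE[OF fg] by blast
  define k where "k v = - h v / c" for v
  define G where "G v = (\<Sum>j<m. (v ! 0 * k v) ^ j) / c" for v
  have k_pf: "k \<in> polyfun n"
    unfolding k_def divide_inverse using n h by (intro polyfun_intros)
  have G_pf: "G \<in> polyfun n"
    unfolding G_def divide_inverse using n k_pf by (intro polyfun_intros) auto
  have gG: "g v * G v = 1 - (v ! 0 * k v) ^ m" for v
    using c by (simp add: g k_def G_def one_diff_power_eq field_simps)
  have "f v = (v ! 0) ^ m * (F v * G v + f v * k v ^ m)" for v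
  proof -
    have "f v = f v * (g v * G v) + f v * (v ! 0 * k v) ^ m"
      by (simp add: gG right_diff_distrib)
    also have "\<dots> = (f v * g v) * G v + f v * (v ! 0 * k v) ^ m"
      by (simp add: algebra_simps)
    also have "\<dots> = (v ! 0) ^ m * (F v * G v + f v * k v ^ m)"
      by (simp add: F(2) algebra_simps power_mult_distrib)
    finally show ?thesis .
  qed
  moreover have "(\<lambda>v. F v * G v + f v * k v ^ m) \<in> polyfun n"
    by (intro polyfun_intros F(1) G_pf f k_pf)
  ultimately show ?thesis by (intro x_multiplesI)
qed

text \<open>\<open>(f\<^sup>d - w\<^sup>d) / (f - w) = d w\<^bsup>d-1\<^esup> + x (\<dots>)\<close> is a unit modulo \<open>x\<close>, since \<open>d w \<noteq> 0\<close>.\<close>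
lemma x_multiples_power_diff_cancel:
  fixes h :: "'a::field_char_0 list \<Rightarrow> 'a"
  assumes n: "0 < n" and h: "h \<in> polyfun n" and w: "w \<noteq> 0" and d: "d \<ge> 1"
    and pow: "(\<lambda>v. (w + v ! 0 * h v) ^ d - w ^ d) \<in> x_multiples n m"
  shows "(\<lambda>v. (w + v ! 0 * h v) - w) \<in> x_multiples n m"
proof -
  define R where "R = power_diff_quot d [:0, 1:] [:w:]"
  define k where "k v = h v * poly (synthetic_div R w) (w + v ! 0 * h v)" for v
  have unit: "power_diff_quot d (w + v ! 0 * h v) w = of_nat d * w ^ (d - 1) + v ! 0 * k v" for v
    using poly_eq_synthetic_div[of R "w + v ! 0 * h v" w]
    by (simp add: R_def k_def poly_power_diff_quot power_diff_quot_diag)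
  have prod: "(\<lambda>v. (w + v ! 0 * h v - w) * power_diff_quot d (w + v ! 0 * h v) w) \<in> x_multiples n m"
    using pow by (simp only: power_diff_eq_mult_quot[symmetric])
  have "(\<lambda>v. w + v ! 0 * h v - w) \<in> polyfun n" and "k \<in> polyfun n"
    unfolding k_def using n h by (auto intro!: polyfun_intros)
  moreover have "of_nat d * w ^ (d - 1) \<noteq> 0" using w d by simp
  ultimately show ?thesis
    using x_multiples_cancel_unit[OF n _ _ prod unit] by blast
qed

section \<open>Charts of the hypersurface\<close>

lemma H_finite: "d \<ge> 1 \<Longrightarrow> finite (H d :: 'a::field set)"
proof -
  assume d: "d \<ge> 1"
  have "monom 1 d - 1 \<noteq> (0 :: 'a poly)"
  proof
    assume "monom 1 d - 1 = (0 :: 'a poly)"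
    then have "coeff (monom 1 d - 1) d = (0::'a)" by simp
    then show False using d by (simp add: coeff_1)
  qed
  then have "finite {w. poly (monom 1 d - 1) w = (0::'a)}" by (rule poly_roots_finite)
  moreover have "H d = {w. poly (monom 1 d - 1) w = (0::'a)}" by (auto simp: H_def poly_monom)
  ultimately show ?thesis by simp
qed

lemma one_in_H: "1 \<in> H d"
  by (simp add: H_def)

locale glued_hypersurface =
  fixes d r s :: nat and a a' :: "nat \<Rightarrow> 'k::field_char_0"
  assumes d: "d \<ge> 1" and r: "r \<ge> 1" and s: "s \<ge> 1"
begin

lemma finite_H: "finite (H d :: 'k set)"
  using H_finite d by blast

abbreviation F :: "'k \<Rightarrow> 'k \<Rightarrow> 'k" where "F \<equiv> binary_form d a"
abbreviation pa :: "'k \<Rightarrow> 'k poly" where "pa w \<equiv> pw d a r w"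
abbreviation pa' :: "'k \<Rightarrow> 'k poly" where "pa' w \<equiv> pw d a' s w"

definition qa :: "'k \<Rightarrow> 'k poly" where
  "qa w = (1 - Fsub d a (pa w)) div monom 1 r"

abbreviation Q :: "'k \<Rightarrow> 'k \<Rightarrow> 'k \<Rightarrow> 'k" where
  "Q w x y \<equiv> binary_form_quot d a x y (poly (pa w) x)"

lemma pa_at_0: "w \<in> H d \<Longrightarrow> poly (pa w) 0 = w"
  using pw_props(2) d r by blast

lemma qa_eq: "w \<in> H d \<Longrightarrow> x ^ r * poly (qa w) x + F x (poly (pa w) x) = 1"
proof -
  assume "w \<in> H d"
  then have "1 - Fsub d a (pa w) = monom 1 r * qa w"
    unfolding qa_def using pw_props(3)[of w d r a] d r by simp
  from arg_cong[OF this, of "\<lambda>p. poly p x"] show ?thesis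
    by (simp add: poly_Fsub poly_monom algebra_simps)
qed

lemma Q_at_0: "w \<in> H d \<Longrightarrow> Q w 0 w = of_nat d * w ^ (d - 1)"
  by (simp add: pa_at_0 binary_form_quot_at_0)

lemma Q_at_0_nonzero: "w \<in> H d \<Longrightarrow> Q w 0 w \<noteq> 0"
  using Q_at_0 H_nonzero[of w d] d by simp

lemma F_at_0_root: "0 ^ r * z + F 0 y = 1 \<Longrightarrow> y \<in> H d"
  using r d by (simp add: binary_form_at_0 H_def power_0_left)

text \<open>Chart \<open>\<omega>\<close> has coordinates \<open>(x, u)\<close>; off \<open>x = 0\<close>, \<open>u = (y - p\<^sub>\<omega>(x)) / x\<^sup>r\<close>, and on
  \<open>x = 0\<close> it is read off from \<open>z = q\<^sub>\<omega>(0) - u Q\<^sub>\<omega>(0, \<omega>)\<close>.\<close>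
definition chart_y :: "'k \<Rightarrow> 'k \<Rightarrow> 'k \<Rightarrow> 'k" where
  "chart_y w x u = poly (pa w) x + x ^ r * u"

definition chart_z :: "'k \<Rightarrow> 'k \<Rightarrow> 'k \<Rightarrow> 'k" where
  "chart_z w x u = poly (qa w) x - u * Q w x (chart_y w x u)"

lemma chart_eq: "w \<in> H d \<Longrightarrow> x ^ r * chart_z w x u + F x (chart_y w x u) = 1"
  using qa_eq[of w x] binary_form_diff[of d a x "chart_y w x u" "poly (pa w) x"]
  by (simp add: chart_z_def chart_y_def algebra_simps)

lemma chart_y_at_0: "w \<in> H d \<Longrightarrow> chart_y w 0 u = w"
  using r by (simp add: chart_y_def pa_at_0 power_0_left)

lemma chart_z_at_0: "w \<in> H d \<Longrightarrow> chart_z w 0 u = poly (qa w) 0 - u * Q w 0 w"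
  by (simp add: chart_z_def chart_y_at_0)

lemma chart_y_inverse: "x \<noteq> 0 \<Longrightarrow> chart_y w x ((y - poly (pa w) x) / x ^ r) = y"
  by (simp add: chart_y_def)

lemma chart_z_inverse:
  assumes "w \<in> H d" and "x \<noteq> 0" and "x ^ r * z + F x y = 1"
  shows "chart_z w x ((y - poly (pa w) x) / x ^ r) = z"
proof -
  have "x ^ r * chart_z w x ((y - poly (pa w) x) / x ^ r) + F x y = 1"
    using chart_eq[OF assms(1), of x "(y - poly (pa w) x) / x ^ r"] assms(2)
    by (simp add: chart_y_inverse)
  with assms(3) have "x ^ r * chart_z w x ((y - poly (pa w) x) / x ^ r) = x ^ r * z"
    by (metis add_right_cancel)
  with assms(2) show ?thesis by simp
qed

lemma chart_at_0_inverse: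
  "w \<in> H d \<Longrightarrow> chart_z w 0 ((poly (qa w) 0 - z) / Q w 0 w) = z"
  by (simp add: chart_z_at_0 Q_at_0_nonzero)

lemma chart_coordinate_unique:
  assumes "w \<in> H d" and "l \<in> H d" and "x \<noteq> 0" and "chart_y l x u' = chart_y w x u"
  shows "chart_z l x u' = chart_z w x u"
proof -
  have "x ^ r * chart_z l x u' = x ^ r * chart_z w x u"
    using chart_eq[OF assms(1), of x u] chart_eq[OF assms(2), of x u'] assms(4)
    by (metis add_right_cancel)
  with assms(3) show ?thesis by simp
qed

lemma polyfun_chart_y: "f \<in> polyfun n \<Longrightarrow> g \<in> polyfun n \<Longrightarrow> (\<lambda>v. chart_y w (f v) (g v)) \<in> polyfun n"
  unfolding chart_y_def by (intro polyfun_intros)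

lemma polyfun_Q: "f \<in> polyfun n \<Longrightarrow> g \<in> polyfun n \<Longrightarrow> (\<lambda>v. Q w (f v) (g v)) \<in> polyfun n"
  unfolding binary_form_quot_def power_diff_quot_def by (intro polyfun_intros)

lemma polyfun_chart_z: "f \<in> polyfun n \<Longrightarrow> g \<in> polyfun n \<Longrightarrow> (\<lambda>v. chart_z w (f v) (g v)) \<in> polyfun n"
  unfolding chart_z_def by (intro polyfun_intros polyfun_Q polyfun_chart_y)

section \<open>A regular function interpolating the polynomials \<open>p'\<^sub>\<omega>\<close>\<close>

definition E :: "'k \<Rightarrow> 'k \<Rightarrow> 'k \<Rightarrow> 'k" where
  "E x y z = - (x ^ (r - 1) * z + (\<Sum>i=1..d. a i * x ^ (i - 1) * y ^ (d - i)))"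

lemma E_eq:
  assumes "x ^ r * z + F x y = 1"
  shows "y ^ d = 1 + x * E x y z"
proof -
  have "x ^ i = x * x ^ (i - 1)" if "i \<ge> 1" for i
    using that by (simp add: power_eq_if)
  then have "x * (\<Sum>i=1..d. a i * x ^ (i - 1) * y ^ (d - i)) = (\<Sum>i=1..d. a i * x ^ i * y ^ (d - i))"
    by (simp add: sum_distrib_left algebra_simps)
  moreover have "x ^ r = x * x ^ (r - 1)" using r by (simp add: power_eq_if)
  ultimately show ?thesis
    using assms by (simp add: E_def binary_form_def algebra_simps)
qed

lemma polyfun_E:
  "f \<in> polyfun n \<Longrightarrow> g \<in> polyfun n \<Longrightarrow> h \<in> polyfun n \<Longrightarrow> (\<lambda>v. E (f v) (g v) (h v)) \<in> polyfun n"
  unfolding E_def by (intro polyfun_intros)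

definition S :: "'k poly" where
  "S = (SOME S. poly S 0 = 1 \<and> monom 1 s dvd (1 - S ^ d * [:1, 1:]))"

lemma S_props: "poly S 0 = 1" "monom 1 s dvd (1 - S ^ d * [:1, 1:])"
  using someI_ex[OF approx_root_of_inverse[OF d s]] unfolding S_def by blast+

definition Omega :: "'k \<Rightarrow> 'k \<Rightarrow> 'k \<Rightarrow> 'k" where
  "Omega x y z = y * poly S (x * E x y z)"

lemma polyfun_Omega:
  "f \<in> polyfun n \<Longrightarrow> g \<in> polyfun n \<Longrightarrow> h \<in> polyfun n \<Longrightarrow> (\<lambda>v. Omega (f v) (g v) (h v)) \<in> polyfun n"
  unfolding Omega_def by (intro polyfun_intros polyfun_E)

definition lagrange :: "'k \<Rightarrow> 'k poly" where
  "lagrange l = smult (inverse (\<Prod>m\<in>H d - {l}. l - m)) (\<Prod>m\<in>H d - {l}. [:- m, 1:])"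

lemma poly_lagrange:
  assumes "l \<in> H d" and "m \<in> H d"
  shows "poly (lagrange l) m = (if m = l then 1 else 0)"
proof -
  have "(\<Prod>m\<in>H d - {l}. l - m) \<noteq> 0" using finite_H by (simp add: prod_zero_iff)
  moreover have "(\<Prod>m'\<in>H d - {l}. m - m') = 0" if "m \<noteq> l"
    using finite_H assms(2) that by (subst prod_zero_iff) auto
  ultimately show ?thesis by (simp add: lagrange_def poly_prod)
qed

definition pa'_interp :: "'k \<Rightarrow> 'k \<Rightarrow> 'k \<Rightarrow> 'k" where
  "pa'_interp x y z = (\<Sum>l\<in>H d. poly (pa' l) x * poly (lagrange l) (Omega x y z))"

abbreviation Omega_chart :: "'k \<Rightarrow> 'k list \<Rightarrow> 'k" where
  "Omega_chart w v \<equiv> Omega (v ! 0) (chart_y w (v ! 0) (v ! 1)) (chart_z w (v ! 0) (v ! 1))"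

lemma Omega_chart_power: "w \<in> H d \<Longrightarrow> (\<lambda>v. Omega_chart w v ^ d - w ^ d) \<in> x_multiples 2 s"
proof -
  assume w: "w \<in> H d"
  define Ev where "Ev v = E (v ! 0) (chart_y w (v ! 0) (v ! 1)) (chart_z w (v ! 0) (v ! 1))" for v
  obtain R where "1 - S ^ d * [:1, 1:] = monom 1 s * R"
    using S_props(2) by (auto elim: dvdE)
  from arg_cong[OF this, of "\<lambda>p. poly p e" for e]
  have R: "1 - poly S e ^ d * (1 + e) = e ^ s * poly R e" for e
    by (simp add: poly_monom poly_power algebra_simps)
  have "Omega_chart w v ^ d - w ^ d = (v ! 0) ^ s * - (Ev v ^ s * poly R (v ! 0 * Ev v))" for v
  proof -
    have "Omega_chart w v ^ d - w ^ d = - (1 - poly S (v ! 0 * Ev v) ^ d * (1 + v ! 0 * Ev v))"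
      using w E_eq[OF chart_eq[OF w]]
      by (simp add: Omega_def Ev_def H_def power_mult_distrib algebra_simps)
    then show ?thesis by (simp add: R power_mult_distrib)
  qed
  moreover have "(\<lambda>v. - (Ev v ^ s * poly R (v ! 0 * Ev v))) \<in> polyfun 2"
    unfolding Ev_def by (intro polyfun_intros polyfun_E polyfun_chart_y polyfun_chart_z) auto
  ultimately show ?thesis by (intro x_multiplesI)
qed

lemma Omega_chart_mod_x: "w \<in> H d \<Longrightarrow> \<exists>h \<in> polyfun 2. \<forall>v. Omega_chart w v = w + v ! 0 * h v"
proof -
  assume w: "w \<in> H d"
  define Ev where "Ev v = E (v ! 0) (chart_y w (v ! 0) (v ! 1)) (chart_z w (v ! 0) (v ! 1))" for v
  define h1 where "h1 v = poly (synthetic_div (pa w) 0) (v ! 0) + v ! 0 ^ (r - 1) * v ! 1" for v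
  define h2 where "h2 v = Ev v * poly (synthetic_div S 0) (v ! 0 * Ev v)" for v
  have Y: "chart_y w (v ! 0) (v ! 1) = w + v ! 0 * h1 v" for v
    using poly_eq_synthetic_div[of "pa w" "v ! 0" 0] r
    by (simp add: chart_y_def h1_def pa_at_0[OF w] power_eq_if algebra_simps)
  have S0: "poly S (v ! 0 * Ev v) = 1 + v ! 0 * h2 v" for v
    using poly_eq_synthetic_div[of S "v ! 0 * Ev v" 0] by (simp add: h2_def S_props(1))
  have "Omega_chart w v = (w + v ! 0 * h1 v) * (1 + v ! 0 * h2 v)" for v
    unfolding Y[symmetric] S0[symmetric] by (simp add: Omega_def Ev_def)
  then have "Omega_chart w v = w + v ! 0 * (h1 v + w * h2 v + v ! 0 * h1 v * h2 v)" for v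
    by (simp add: algebra_simps)
  moreover have "(\<lambda>v. h1 v + w * h2 v + v ! 0 * h1 v * h2 v) \<in> polyfun 2"
    unfolding h1_def h2_def Ev_def
    by (intro polyfun_intros polyfun_E polyfun_chart_y polyfun_chart_z) auto
  ultimately show ?thesis by (intro bexI[of _ "\<lambda>v. h1 v + w * h2 v + v ! 0 * h1 v * h2 v"]) auto
qed

lemma Omega_chart_diff: "w \<in> H d \<Longrightarrow> (\<lambda>v. Omega_chart w v - w) \<in> x_multiples 2 s"
proof -
  assume w: "w \<in> H d"
  then obtain h where h: "h \<in> polyfun 2" and eq: "\<And>v. Omega_chart w v = w + v ! 0 * h v"
    using Omega_chart_mod_x by blast
  have "(\<lambda>v. (w + v ! 0 * h v) ^ d - w ^ d) \<in> x_multiples 2 s"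
    using Omega_chart_power[OF w] by (simp only: eq)
  then have "(\<lambda>v. (w + v ! 0 * h v) - w) \<in> x_multiples 2 s"
    using H_nonzero[OF w d] d by (intro x_multiples_power_diff_cancel[OF _ h]) auto
  then show ?thesis by (simp only: eq)
qed

lemma pa'_interp_chart:
  assumes w: "w \<in> H d"
  shows "(\<lambda>v. poly (pa' w) (v ! 0) - pa'_interp (v ! 0) (chart_y w (v ! 0) (v ! 1)) (chart_z w (v ! 0) (v ! 1)))
    \<in> x_multiples 2 s"
proof -
  have "(\<Sum>l\<in>H d. poly (pa' l) x * poly (lagrange l) w) = (\<Sum>l\<in>H d. if l = w then poly (pa' l) x else 0)" for x
    using w by (intro sum.cong) (auto simp: poly_lagrange)
  then have "(\<Sum>l\<in>H d. poly (pa' l) x * poly (lagrange l) w) = poly (pa' w) x" for x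
    using w finite_H by simp
  then have "poly (pa' w) (v ! 0) - pa'_interp (v ! 0) (chart_y w (v ! 0) (v ! 1)) (chart_z w (v ! 0) (v ! 1)) =
      - (\<Sum>l\<in>H d. poly (pa' l) (v ! 0) * (poly (lagrange l) (Omega_chart w v) - poly (lagrange l) w))" for v
    by (simp add: pa'_interp_def right_diff_distrib sum_subtractf)
  moreover have "(\<lambda>v. poly (lagrange l) (Omega_chart w v) - poly (lagrange l) w) \<in> x_multiples 2 s" for l
    using Omega_chart_diff[OF w]
    by (intro x_multiples_poly_diff polyfun_Omega polyfun_chart_y polyfun_chart_z polyfun.proj) auto
  ultimately show ?thesis
    by (simp only:) (intro x_multiples_uminus x_multiples_sum x_multiples_mult polyfun_intros; simp)
qed

text \<open>The fibre coordinate of chart \<open>\<omega>\<close> is \<open>t - T\<^sub>\<omega>(x, u)\<close> with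
  \<open>T\<^sub>\<omega> = (p'\<^sub>\<omega>(x) - pa'_interp(x, y, z)) / x\<^sup>s\<close>, a polynomial in \<open>(x, u)\<close>.\<close>
definition T_poly :: "'k \<Rightarrow> 'k list \<Rightarrow> 'k" where
  "T_poly w = (SOME g. g \<in> polyfun 2 \<and> (\<forall>v. poly (pa' w) (v ! 0) -
      pa'_interp (v ! 0) (chart_y w (v ! 0) (v ! 1)) (chart_z w (v ! 0) (v ! 1)) = (v ! 0) ^ s * g v))"

definition T :: "'k \<Rightarrow> 'k \<Rightarrow> 'k \<Rightarrow> 'k" where
  "T w x u = T_poly w [x, u]"

lemma T_poly_props:
  assumes "w \<in> H d"
  shows "T_poly w \<in> polyfun 2 \<and> (\<forall>v. poly (pa' w) (v ! 0) -
      pa'_interp (v ! 0) (chart_y w (v ! 0) (v ! 1)) (chart_z w (v ! 0) (v ! 1)) = (v ! 0) ^ s * T_poly w v)"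
proof -
  obtain g where "g \<in> polyfun 2" "\<And>v. poly (pa' w) (v ! 0) -
      pa'_interp (v ! 0) (chart_y w (v ! 0) (v ! 1)) (chart_z w (v ! 0) (v ! 1)) = (v ! 0) ^ s * g v"
    using x_multiplesE[OF pa'_interp_chart[OF assms]] by blast
  then have "\<exists>g. g \<in> polyfun 2 \<and> (\<forall>v. poly (pa' w) (v ! 0) -
      pa'_interp (v ! 0) (chart_y w (v ! 0) (v ! 1)) (chart_z w (v ! 0) (v ! 1)) = (v ! 0) ^ s * g v)"
    by blast
  then show ?thesis unfolding T_poly_def by (rule someI_ex)
qed

lemma T_eq:
  assumes "w \<in> H d"
  shows "x ^ s * T w x u = poly (pa' w) x - pa'_interp x (chart_y w x u) (chart_z w x u)"
  using conjunct2[OF T_poly_props[OF assms], THEN spec, of "[x, u]"] by (simp add: T_def)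

lemma T_eq_divide:
  "w \<in> H d \<Longrightarrow> x \<noteq> 0 \<Longrightarrow> T w x u = (poly (pa' w) x - pa'_interp x (chart_y w x u) (chart_z w x u)) / x ^ s"
  using T_eq[of w x u] by (simp add: eq_divide_eq mult.commute)

lemma polyfun_T:
  assumes "w \<in> H d" and "f \<in> polyfun n" and "g \<in> polyfun n"
  shows "(\<lambda>v. T w (f v) (g v)) \<in> polyfun n"
  unfolding T_def using polyfun_compose[of "T_poly w" 2 "[f, g]"] T_poly_props assms by auto

section \<open>The isomorphism onto the glued variety\<close>

lemma chart_relation:
  assumes "w \<in> H d" and "x ^ r * z + F x y = 1"
  shows "x ^ r * (poly (qa w) x - z) = (y - poly (pa w) x) * Q w x y"
proof -
  have "x ^ r * poly (qa w) x = 1 - F x (poly (pa w) x)" and "x ^ r * z = 1 - F x y"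
    using qa_eq[OF assms(1), of x] assms(2) by (simp_all add: eq_diff_eq)
  then show ?thesis by (simp add: right_diff_distrib binary_form_diff[symmetric])
qed

lemma T_at_point:
  assumes "w \<in> H d" and "x \<noteq> 0" and "x ^ r * z + F x y = 1"
  shows "T w x ((y - poly (pa w) x) / x ^ r) = (poly (pa' w) x - pa'_interp x y z) / x ^ s"
  using assms by (simp add: T_eq_divide chart_y_inverse chart_z_inverse)

abbreviation X1 :: "'k list set" where
  "X1 \<equiv> cyl (Xt d r a)"

lemma X1_iff: "q \<in> X1 \<longleftrightarrow> (\<exists>x y z t. q = [x, y, z, t] \<and> x ^ r * z + F x y = 1)"
  unfolding cyl_def Xt_def binary_form_def by auto

lemma X1E:
  assumes "q \<in> X1"
  obtains x y z t where "q = [x, y, z, t]" and "x ^ r * z + F x y = 1"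
  using assms X1_iff by blast

definition psi_chart :: "'k \<Rightarrow> 'k list \<Rightarrow> 'k list" where
  "psi_chart w v = [v ! 0, chart_y w (v ! 0) (v ! 1), chart_z w (v ! 0) (v ! 1), v ! 2 + T w (v ! 0) (v ! 1)]"

definition psi :: "('k \<times> 'k list) set \<Rightarrow> 'k list" where
  "psi C = psi_chart (fst (SOME e. e \<in> C)) (snd (SOME e. e \<in> C))"

text \<open>On \<open>x = 0\<close> the coordinate \<open>y\<close> lies in \<open>H(d)\<close> (\<open>F_at_0_root\<close>) and serves as the
  chart index.\<close>
definition phi :: "'k list \<Rightarrow> ('k \<times> 'k list) set" where
  "phi q = (let x = q ! 0; y = q ! 1; z = q ! 2; t = q ! 3;
     w = (if x = 0 then y else 1);
     u = (if x = 0 then (poly (qa y) 0 - z) / Q y 0 y else (y - poly (pa 1) x) / x ^ r)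
   in Wcls d r s a a' w [x, u, t - T w x u])"

lemma psi_chart_in_X1: "w \<in> H d \<Longrightarrow> psi_chart w v \<in> X1"
  unfolding X1_iff psi_chart_def using chart_eq by blast

lemma psi_chart_glue:
  assumes "((w, v), (l, v')) \<in> glue_rel d r s a a'"
  shows "psi_chart w v = psi_chart l v'"
proof -
  obtain x c1 c2 where w: "w \<in> H d" and l: "l \<in> H d" and v: "v = [x, c1, c2]"
    and x: "x = 0 \<longrightarrow> w = l"
    and v': "v' = [x, c1 + glue_shift d a r w l x, c2 + glue_shift d a' s w l x]"
    using assms unfolding glue_rel_iff by blast
  show ?thesis
  proof (cases "x = 0")
    case False
    have Y: "chart_y l x (c1 + glue_shift d a r w l x) = chart_y w x c1"
      using False by (simp add: chart_y_def glue_shift_def field_simps)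
    then have Z: "chart_z l x (c1 + glue_shift d a r w l x) = chart_z w x c1"
      using chart_coordinate_unique[OF w l False] by blast
    have "glue_shift d a' s w l x + T l x (c1 + glue_shift d a r w l x) = T w x c1"
      unfolding T_eq_divide[OF l False] T_eq_divide[OF w False] Y Z
      by (simp add: glue_shift_def diff_divide_distrib)
    then show ?thesis using v v' Y Z by (simp add: psi_chart_def add.assoc)
  qed (use v v' x in simp)
qed

lemma psi_Wcls: "w \<in> H d \<Longrightarrow> length v = 3 \<Longrightarrow> psi (Wcls d r s a a' w v) = psi_chart w v"
proof -
  assume "w \<in> H d" "length v = 3"
  then have "\<exists>e. e \<in> Wcls d r s a a' w v" using Wcls_self by blast
  then have "(SOME e. e \<in> Wcls d r s a a' w v) \<in> Wcls d r s a a' w v" by (rule someI_ex)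
  then have "((w, v), (fst (SOME e. e \<in> Wcls d r s a a' w v), snd (SOME e. e \<in> Wcls d r s a a' w v)))
      \<in> glue_rel d r s a a'"
    by (simp add: Wcls_def)
  then show ?thesis unfolding psi_def by (metis psi_chart_glue)
qed

lemma phi_eq_chart:
  assumes w: "w \<in> H d" and x: "x \<noteq> 0" and eq: "x ^ r * z + F x y = 1"
  shows "phi [x, y, z, t] =
    Wcls d r s a a' w [x, (y - poly (pa w) x) / x ^ r, t - T w x ((y - poly (pa w) x) / x ^ r)]"
proof -
  have "phi [x, y, z, t] =
      Wcls d r s a a' 1 [x, (y - poly (pa 1) x) / x ^ r, t - T 1 x ((y - poly (pa 1) x) / x ^ r)]"
    using x by (simp add: phi_def Let_def)
  also have "\<dots> = Wcls d r s a a' w [x, (y - poly (pa w) x) / x ^ r, t - T w x ((y - poly (pa w) x) / x ^ r)]"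
  proof (intro Wcls_eq)
    have "(y - poly (pa 1) x) / x ^ r + glue_shift d a r 1 w x = (y - poly (pa w) x) / x ^ r"
      by (simp add: glue_shift_def diff_divide_distrib)
    moreover have "t - T 1 x ((y - poly (pa 1) x) / x ^ r) + glue_shift d a' s 1 w x =
        t - T w x ((y - poly (pa w) x) / x ^ r)"
      unfolding T_at_point[OF one_in_H x eq] T_at_point[OF w x eq]
      by (simp add: glue_shift_def diff_divide_distrib)
    ultimately show "((1, [x, (y - poly (pa 1) x) / x ^ r, t - T 1 x ((y - poly (pa 1) x) / x ^ r)]),
        (w, [x, (y - poly (pa w) x) / x ^ r, t - T w x ((y - poly (pa w) x) / x ^ r)]))
      \<in> glue_rel d r s a a'"
      using one_in_H w x unfolding glue_rel_iff by auto
  qed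
  finally show ?thesis .
qed

lemma phi_at_0:
  "phi [0, y, z, t] =
    Wcls d r s a a' y [0, (poly (qa y) 0 - z) / Q y 0 y, t - T y 0 ((poly (qa y) 0 - z) / Q y 0 y)]"
  by (simp add: phi_def Let_def)

lemma psi_phi: "q \<in> X1 \<Longrightarrow> psi (phi q) = q"
proof (elim X1E)
  fix x y z t assume q: "q = [x, y, z, t]" and eq: "x ^ r * z + F x y = 1"
  show "psi (phi q) = q"
  proof (cases "x = 0")
    case True
    then have y: "y \<in> H d" using eq F_at_0_root by simp
    show ?thesis
      using q True by (simp add: phi_at_0 psi_Wcls[OF y] psi_chart_def chart_y_at_0[OF y]
          chart_at_0_inverse[OF y])
  next
    case False
    show ?thesis
      using q by (simp add: phi_eq_chart[OF one_in_H False eq] psi_Wcls[OF one_in_H] psi_chart_def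
          chart_y_inverse[OF False] chart_z_inverse[OF one_in_H False eq])
  qed
qed

lemma phi_psi:
  assumes "C \<in> Wpts d r s a a'"
  shows "phi (psi C) = C"
proof -
  obtain w v where w: "w \<in> H d" and v: "length v = 3" and C_v: "C = Wcls d r s a a' w v"
    using assms by (rule WptsE)
  obtain x u c where "v = [x, u, c]" using v by (rule length_3_cases)
  with C_v have C: "C = Wcls d r s a a' w [x, u, c]" by simp
  with w have psi_C: "psi C = [x, chart_y w x u, chart_z w x u, c + T w x u]"
    by (simp add: psi_Wcls psi_chart_def)
  show "phi (psi C) = C"
  proof (cases "x = 0")
    case True
    then have "phi (psi C) = phi [0, w, chart_z w 0 u, c + T w 0 u]"
      using psi_C chart_y_at_0[OF w] by simp
    also have "\<dots> = C"
      using True C Q_at_0_nonzero[OF w] by (simp add: phi_at_0 chart_z_at_0[OF w])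
    finally show ?thesis .
  next
    case False
    have "phi (psi C) = Wcls d r s a a' w [x, (chart_y w x u - poly (pa w) x) / x ^ r,
        c + T w x u - T w x ((chart_y w x u - poly (pa w) x) / x ^ r)]"
      unfolding psi_C by (rule phi_eq_chart[OF w False chart_eq[OF w]])
    also have "(chart_y w x u - poly (pa w) x) / x ^ r = u"
      using False by (simp add: chart_y_def)
    finally show ?thesis by (simp add: C)
  qed
qed

lemma mor_from_W_psi: "mor_from_W 4 X1 d r s a a' psi"
  unfolding mor_from_W_def
proof (intro conjI ballI subsetI)
  fix q assume "q \<in> psi ` Wpts d r s a a'"
  then show "q \<in> X1"
    by (auto elim!: WptsE simp: psi_Wcls psi_chart_in_X1)
next
  fix w :: 'k assume w: "w \<in> H d"
  let ?gs = "[\<lambda>v. v ! 0, \<lambda>v. chart_y w (v ! 0) (v ! 1), \<lambda>v. chart_z w (v ! 0) (v ! 1),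
      \<lambda>v. v ! 2 + T w (v ! 0) (v ! 1)]"
  have "\<forall>g\<in>set ?gs. g \<in> polyfun 3"
    using w by (auto intro!: polyfun_intros polyfun_chart_y polyfun_chart_z polyfun_T)
  moreover have "\<forall>v. length v = 3 \<longrightarrow> psi (Wcls d r s a a' w v) = map (\<lambda>g. g v) ?gs"
    using w by (simp add: psi_Wcls psi_chart_def)
  ultimately show "\<exists>gs. length gs = 4 \<and> (\<forall>g\<in>set gs. g \<in> polyfun 3) \<and>
      (\<forall>v. length v = 3 \<longrightarrow> psi (Wcls d r s a a' w v) = map (\<lambda>g. g v) gs)"
    by (intro exI[of _ ?gs]) simp
qed

lemma phi_near_x_nonzero:
  assumes "q \<in> X1" and "q ! 0 ^ r \<noteq> 0"
  shows "phi q = Wcls d r s a a' 1 [q ! 0, (q ! 1 - poly (pa 1) (q ! 0)) / q ! 0 ^ r,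
    q ! 3 - T 1 (q ! 0) ((q ! 1 - poly (pa 1) (q ! 0)) / q ! 0 ^ r)]"
proof -
  have "q ! 0 \<noteq> 0" using assms(2) r by (auto simp: power_0_left)
  with assms(1) show ?thesis by (auto elim!: X1E simp: phi_def Let_def)
qed

lemma phi_near_root:
  assumes y: "y \<in> H d" and "q \<in> X1" and Q: "Q y (q ! 0) (q ! 1) \<noteq> 0"
  shows "phi q = Wcls d r s a a' y [q ! 0, (poly (qa y) (q ! 0) - q ! 2) / Q y (q ! 0) (q ! 1),
    q ! 3 - T y (q ! 0) ((poly (qa y) (q ! 0) - q ! 2) / Q y (q ! 0) (q ! 1))]"
proof -
  obtain x' y' z' t' where q: "q = [x', y', z', t']" and eq: "x' ^ r * z' + F x' y' = 1"
    using assms(2) by (rule X1E)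
  have rel: "x' ^ r * (poly (qa y) x' - z') = (y' - poly (pa y) x') * Q y x' y'"
    by (rule chart_relation[OF y eq])
  show ?thesis
  proof (cases "x' = 0")
    case True
    with rel r have "(y' - y) * Q y 0 y' = 0" by (simp add: pa_at_0[OF y] power_0_left)
    with Q q True have "y' = y" by simp
    with q True show ?thesis by (simp add: phi_at_0)
  next
    case False
    with rel Q q have "(y' - poly (pa y) x') / x' ^ r = (poly (qa y) x' - z') / Q y x' y'"
      by (simp add: frac_eq_eq mult.commute)
    with q show ?thesis by (simp add: phi_eq_chart[OF y False eq])
  qed
qed

lemma chart_coordinates_fractions:
  assumes w: "w \<in> H d" and h: "h \<in> polyfun 4" and g: "g \<in> polyfun 4"
  shows "\<exists>h' g1 g2 g3. h' \<in> polyfun 4 \<and> g1 \<in> polyfun 4 \<and> g2 \<in> polyfun 4 \<and> g3 \<in> polyfun 4 \<and>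
    (\<forall>q. h' q \<noteq> 0 \<longleftrightarrow> h q \<noteq> 0) \<and>
    (\<forall>q. h q \<noteq> 0 \<longrightarrow> [q ! 0, g q / h q, q ! 3 - T w (q ! 0) (g q / h q)] =
       [g1 q / h' q, g2 q / h' q, g3 q / h' q])"
proof -
  define fs :: "('k list \<Rightarrow> 'k) list" where "fs = [\<lambda>q. q ! 0 * h q, g, \<lambda>q. q ! 3 * h q]"
  have "(\<lambda>v. v ! 2 - T w (v ! 0) (v ! 1)) \<in> polyfun 3"
    using w by (intro polyfun_intros polyfun_T) auto
  moreover have "length fs = 3" by (simp add: fs_def)
  moreover have "f \<in> polyfun 4" if "f \<in> set fs" for f
    using that h g by (auto simp: fs_def intro!: polyfun.mult polyfun.proj)
  ultimately obtain N G where G: "G \<in> polyfun 4" and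
    "\<forall>q. h q \<noteq> 0 \<longrightarrow> (\<lambda>v. v ! 2 - T w (v ! 0) (v ! 1)) (map (\<lambda>f. f q / h q) fs) = G q / h q ^ N"
    using polyfun_compose_fractions[OF _ _ _ h] by blast
  then have GN: "q ! 3 - T w (q ! 0) (g q / h q) = G q / h q ^ N" if "h q \<noteq> 0" for q
    using that by (simp add: fs_def)
  show ?thesis
  proof (intro exI conjI allI impI)
    show "(\<lambda>q. h q ^ Suc N) \<in> polyfun 4" and "(\<lambda>q. q ! 0 * h q ^ Suc N) \<in> polyfun 4"
      and "(\<lambda>q. g q * h q ^ N) \<in> polyfun 4" and "(\<lambda>q. G q * h q) \<in> polyfun 4"
      by (intro polyfun_intros h g G; simp)+
    fix q
    show "h q ^ Suc N \<noteq> 0 \<longleftrightarrow> h q \<noteq> 0" by auto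
    assume "h q \<noteq> 0"
    then show "[q ! 0, g q / h q, q ! 3 - T w (q ! 0) (g q / h q)] =
        [q ! 0 * h q ^ Suc N / h q ^ Suc N, g q * h q ^ N / h q ^ Suc N, G q * h q / h q ^ Suc N]"
      by (simp add: GN[OF \<open>h q \<noteq> 0\<close>])
  qed
qed

lemma phi_local_chart:
  assumes "p \<in> X1"
  obtains w h g where "w \<in> H d" "h \<in> polyfun 4" "g \<in> polyfun 4" "h p \<noteq> 0"
    "\<And>q. q \<in> X1 \<Longrightarrow> h q \<noteq> 0 \<Longrightarrow>
       phi q = Wcls d r s a a' w [q ! 0, g q / h q, q ! 3 - T w (q ! 0) (g q / h q)]"
proof (cases "p ! 0 = 0")
  case True
  with assms have y: "p ! 1 \<in> H d" by (auto elim!: X1E intro: F_at_0_root)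
  show thesis
  proof (rule that[OF y, of "\<lambda>q. Q (p ! 1) (q ! 0) (q ! 1)" "\<lambda>q. poly (qa (p ! 1)) (q ! 0) - q ! 2"])
    show "(\<lambda>q. Q (p ! 1) (q ! 0) (q ! 1)) \<in> polyfun 4"
      by (intro polyfun_Q polyfun.proj) simp_all
    show "(\<lambda>q. poly (qa (p ! 1)) (q ! 0) - q ! 2) \<in> polyfun 4"
      by (intro polyfun_intros) simp_all
    show "Q (p ! 1) (p ! 0) (p ! 1) \<noteq> 0"
      using Q_at_0_nonzero[OF y] True by simp
  qed (rule phi_near_root[OF y])
next
  case False
  show thesis
  proof (rule that[OF one_in_H, of "\<lambda>q. q ! 0 ^ r" "\<lambda>q. q ! 1 - poly (pa 1) (q ! 0)"])
    show "(\<lambda>q. q ! 0 ^ r) \<in> polyfun 4" and "(\<lambda>q. q ! 1 - poly (pa 1) (q ! 0)) \<in> polyfun 4"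
      by (intro polyfun_intros; simp)+
    show "p ! 0 ^ r \<noteq> 0" using False by simp
  qed (rule phi_near_x_nonzero)
qed

lemma mor_to_W_phi: "mor_to_W 4 X1 d r s a a' phi"
  unfolding mor_to_W_def
proof
  fix p assume "p \<in> X1"
  then obtain w h g where w: "w \<in> H d" and hg: "h \<in> polyfun 4" "g \<in> polyfun 4" "h p \<noteq> 0"
    and loc: "\<And>q. q \<in> X1 \<Longrightarrow> h q \<noteq> 0 \<Longrightarrow>
      phi q = Wcls d r s a a' w [q ! 0, g q / h q, q ! 3 - T w (q ! 0) (g q / h q)]"
    by (rule phi_local_chart) blast
  obtain h' g1 g2 g3 where pf: "h' \<in> polyfun 4" "g1 \<in> polyfun 4" "g2 \<in> polyfun 4" "g3 \<in> polyfun 4"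
    and nz: "\<forall>q. h' q \<noteq> 0 \<longleftrightarrow> h q \<noteq> 0"
    and eq: "\<forall>q. h q \<noteq> 0 \<longrightarrow> [q ! 0, g q / h q, q ! 3 - T w (q ! 0) (g q / h q)] =
       [g1 q / h' q, g2 q / h' q, g3 q / h' q]"
    using chart_coordinates_fractions[OF w hg(1,2)] by blast
  have "\<forall>q\<in>X1. h' q \<noteq> 0 \<longrightarrow> phi q = Wcls d r s a a' w [g1 q / h' q, g2 q / h' q, g3 q / h' q]"
    using loc nz eq by simp
  moreover have "h' p \<noteq> 0" using nz hg(3) by simp
  ultimately show "\<exists>w\<in>H d. \<exists>h g1 g2 g3. h \<in> polyfun 4 \<and> g1 \<in> polyfun 4 \<and>
      g2 \<in> polyfun 4 \<and> g3 \<in> polyfun 4 \<and> h p \<noteq> 0 \<and>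
      (\<forall>q\<in>X1. h q \<noteq> 0 \<longrightarrow> phi q = Wcls d r s a a' w [g1 q / h q, g2 q / h q, g3 q / h q])"
    using w pf by blast
qed

lemma iso_W_X1: "iso_W 4 X1 d r s a a'"
  unfolding iso_W_def using mor_to_W_phi mor_from_W_psi psi_phi phi_psi by blast

end

theorem theorem1p4p23:
  fixes a a' :: "nat \<Rightarrow> 'k::field_char_0" and d r s :: nat
  assumes alg_closed: "\<And>q :: 'k poly. degree q \<ge> 1 \<Longrightarrow> \<exists>x. poly q x = 0"
    and "d \<ge> 2" and "r \<ge> 1" and "s \<ge> 1"
  shows "iso_W 4 (cyl (Xt d r a)) d r s a a' \<and> iso_W 4 (cyl (Xt d s a')) d r s a a'"
proof
  interpret X: glued_hypersurface d r s a a'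
    using assms by unfold_locales auto
  show "iso_W 4 (cyl (Xt d r a)) d r s a a'" by (rule X.iso_W_X1)
next
  interpret X': glued_hypersurface d s r a' a
    using assms by unfold_locales auto
  show "iso_W 4 (cyl (Xt d s a')) d r s a a'" by (rule iso_W_swap[OF X'.iso_W_X1])
qed

end
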